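(* Let \(D\) be a bornological \(V\)-algebra and let \(D'\) be \(D\) with the compactoid bornology. Then \(D'\) is again a bornological \(V\)-algebra. If \(D\) is semidagger, then so is \(D'\).
   Context: Let \(V\) be a complete discrete valuation ring with uniformiser \(\pi\). A bornology on a set is a collection of subsets (called bounded) containing all finite subsets and closed under finite unions and under taking subsets. A bornological \(V\)-module is a \(V\)-module with a bornology such that every bounded subset is contained in a bounded \(V\)-submodule. A bornological \(V\)-algebra is a \(V\)-algebra with such a bornology for which multiplication is bounded (if \(S,T\) are bounded then so is \(S\cdot T\)). It is semidagger if for every bounded subset \(S\subseteq D\), the \(V\)-submodule \(\sum_{i=0}^\infty \pi^i S^{i+1}\) (generated by all products \(\pi^i s_0\cdots s_i\) with \(s_j\in S\)) is bounded. A subset \(S\subseteq D\) is compactoid if there is a bounded \(V\)-submodule \(T\subseteq D\) with \(S\subseteq T\) such that for every \(n\in\mathbb N\) there is a finite set \(F_n\subseteq T\) with \(S\subseteq VF_n+\pi^nT\); the compactoid bornology consists of the compactoid subsets. *)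

theory Defs
  imports Main
begin

text \<open>V is modelled as a type 'v of class idom. pi is a uniformiser of a DVR structure
 on V: pi is nonzero, not a unit, and every nonzero element is a unit times a power of pi.\<close>
definition dvr_uniformiser :: "'v::idom \<Rightarrow> bool" where
  "dvr_uniformiser p \<longleftrightarrow> p \<noteq> 0 \<and> \<not> p dvd 1 \<and>
     (\<forall>x. x \<noteq> 0 \<longrightarrow> (\<exists>u n. u dvd 1 \<and> x = u * p ^ n))"

text \<open>pi-adic completeness (separatedness already follows from the DVR condition).\<close>
definition pi_adically_complete :: "'v::idom \<Rightarrow> bool" where
  "pi_adically_complete p \<longleftrightarrow>
     (\<forall>a::nat \<Rightarrow> 'v. \<exists>x. \<forall>n. p ^ n dvd (x - (\<Sum>i<n. a i * p ^ i)))"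

definition v_algebra :: "('v::comm_ring_1 \<Rightarrow> 'd::ring \<Rightarrow> 'd) \<Rightarrow> bool" where
  "v_algebra sm \<longleftrightarrow>
     (\<forall>a b x. sm (a + b) x = sm a x + sm b x) \<and>
     (\<forall>a x y. sm a (x + y) = sm a x + sm a y) \<and>
     (\<forall>a b x. sm (a * b) x = sm a (sm b x)) \<and>
     (\<forall>x. sm 1 x = x) \<and>
     (\<forall>a x y. sm a (x * y) = sm a x * y) \<and>
     (\<forall>a x y. sm a (x * y) = x * sm a y)"

definition v_submodule :: "('v \<Rightarrow> 'd::ring \<Rightarrow> 'd) \<Rightarrow> 'd set \<Rightarrow> bool" where
  "v_submodule sm T \<longleftrightarrow> 0 \<in> T \<and> (\<forall>x\<in>T. \<forall>y\<in>T. x + y \<in> T) \<and> (\<forall>a. \<forall>x\<in>T. sm a x \<in> T)"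

definition v_span :: "('v \<Rightarrow> 'd::ring \<Rightarrow> 'd) \<Rightarrow> 'd set \<Rightarrow> 'd set" where
  "v_span sm X = \<Inter>{T. v_submodule sm T \<and> X \<subseteq> T}"

definition bornology :: "'a set set \<Rightarrow> bool" where
  "bornology B \<longleftrightarrow> (\<forall>S. finite S \<longrightarrow> S \<in> B) \<and>
     (\<forall>S\<in>B. \<forall>T\<in>B. S \<union> T \<in> B) \<and> (\<forall>S\<in>B. \<forall>T. T \<subseteq> S \<longrightarrow> T \<in> B)"

definition bornological_module :: "('v \<Rightarrow> 'd::ring \<Rightarrow> 'd) \<Rightarrow> 'd set set \<Rightarrow> bool" where
  "bornological_module sm B \<longleftrightarrow> bornology B \<and>
     (\<forall>S\<in>B. \<exists>T\<in>B. v_submodule sm T \<and> S \<subseteq> T)"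

definition set_mult :: "'d::times set \<Rightarrow> 'd set \<Rightarrow> 'd set" where
  "set_mult S T = {s * t | s t. s \<in> S \<and> t \<in> T}"

definition bornological_algebra :: "('v::comm_ring_1 \<Rightarrow> 'd::ring \<Rightarrow> 'd) \<Rightarrow> 'd set set \<Rightarrow> bool" where
  "bornological_algebra sm B \<longleftrightarrow> v_algebra sm \<and> bornological_module sm B \<and>
     (\<forall>S\<in>B. \<forall>T\<in>B. set_mult S T \<in> B)"

text \<open>prods S i = set of products s_0 * ... * s_i with all s_j in S.\<close>
fun prods :: "'d::times set \<Rightarrow> nat \<Rightarrow> 'd set" where
  "prods S 0 = S"
| "prods S (Suc n) = set_mult (prods S n) S"

definition semidagger :: "('v::comm_ring_1 \<Rightarrow> 'd::ring \<Rightarrow> 'd) \<Rightarrow> 'v \<Rightarrow> 'd set set \<Rightarrow> bool" where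
  "semidagger sm p B \<longleftrightarrow>
     (\<forall>S\<in>B. v_span sm (\<Union>i. sm (p ^ i) ` prods S i) \<in> B)"

definition compactoid :: "('v::comm_ring_1 \<Rightarrow> 'd::ring \<Rightarrow> 'd) \<Rightarrow> 'v \<Rightarrow> 'd set set \<Rightarrow> 'd set \<Rightarrow> bool" where
  "compactoid sm p B S \<longleftrightarrow>
     (\<exists>T. T \<in> B \<and> v_submodule sm T \<and> S \<subseteq> T \<and>
        (\<forall>n::nat. \<exists>F. finite F \<and> F \<subseteq> T \<and>
            S \<subseteq> {a + b | a b. a \<in> v_span sm F \<and> b \<in> sm (p ^ n) ` T}))"

definition compactoid_bornology :: "('v::comm_ring_1 \<Rightarrow> 'd::ring \<Rightarrow> 'd) \<Rightarrow> 'v \<Rightarrow> 'd set set \<Rightarrow> 'd set set" where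
  "compactoid_bornology sm p B = {S. compactoid sm p B S}"

end

(*
  The natural notion is relative: S is compactoid in a bounded submodule T if, for every n,
  S lies in the span of finitely many elements of T plus p^n T. A set is compactoid iff it
  is compactoid in some bounded T, and enlarging T preserves this. Products work because
  (a + p^n b)(a' + p^n b') = a a' + p^n (a b' + b a' + b p^n b'), which lands in p^n T
  for a bounded submodule T containing the products T1 T2.

  For the dagger property, write S^(i+1) for the (i+1)-fold products from S, let S be
  compactoid in T and put Q = T \<union> T T. Regrouping factors in pairs gives
  T^(i+1) \<subseteq> Q^(i-n+1) once i \<ge> 2n, so p^i S^(i+1) \<subseteq> p^n (p^(i-n) Q^(i-n+1)) is already
  small in the dagger span of Q, which is bounded since the algebra is semidagger.
  The finitely many remaining terms with i < 2n are approximated factor by factor.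
  Hence the dagger span of S is compactoid in that of Q.
*)
theory Submission
  imports Defs
begin

definition plus_smult :: "('v \<Rightarrow> 'd::ring \<Rightarrow> 'd) \<Rightarrow> 'd set \<Rightarrow> 'v \<Rightarrow> 'd set \<Rightarrow> 'd set" where
  "plus_smult sm A c T = {a + sm c b | a b. a \<in> A \<and> b \<in> T}"

definition compactoid_in :: "('v::comm_ring_1 \<Rightarrow> 'd::ring \<Rightarrow> 'd) \<Rightarrow> 'v \<Rightarrow> 'd set \<Rightarrow> 'd set \<Rightarrow> bool" where
  "compactoid_in sm p T S \<longleftrightarrow> v_submodule sm T \<and> S \<subseteq> T \<and>
     (\<forall>n. \<exists>F. finite F \<and> F \<subseteq> T \<and> S \<subseteq> plus_smult sm (v_span sm F) (p ^ n) T)"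

definition dagger_span :: "('v::comm_ring_1 \<Rightarrow> 'd::ring \<Rightarrow> 'd) \<Rightarrow> 'v \<Rightarrow> 'd set \<Rightarrow> 'd set" where
  "dagger_span sm p S = v_span sm (\<Union>i. sm (p ^ i) ` prods S i)"

lemma compactoid_iff: "compactoid sm p B S \<longleftrightarrow> (\<exists>T\<in>B. compactoid_in sm p T S)"
proof -
  have "{a + b | a b. a \<in> A \<and> b \<in> sm c ` T} = plus_smult sm A c T" for A c T
    unfolding plus_smult_def by blast
  then show ?thesis
    unfolding compactoid_def compactoid_in_def by auto
qed

lemma semidagger_iff: "semidagger sm p B \<longleftrightarrow> (\<forall>S\<in>B. dagger_span sm p S \<in> B)"
  unfolding semidagger_def dagger_span_def ..

lemma plus_smult_mono: "A \<subseteq> A' \<Longrightarrow> T \<subseteq> T' \<Longrightarrow> plus_smult sm A c T \<subseteq> plus_smult sm A' c T'"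
  unfolding plus_smult_def by blast

subsection \<open>Spans\<close>

lemma v_span_superset: "X \<subseteq> v_span sm X"
  unfolding v_span_def by blast

lemma v_span_least: "v_submodule sm T \<Longrightarrow> X \<subseteq> T \<Longrightarrow> v_span sm X \<subseteq> T"
  unfolding v_span_def by blast

lemma v_span_mono: "X \<subseteq> Y \<Longrightarrow> v_span sm X \<subseteq> v_span sm Y"
  unfolding v_span_def by blast

lemma v_submodule_v_span: "v_submodule sm (v_span sm X)"
  unfolding v_span_def v_submodule_def by blast

lemma v_span_zero: "0 \<in> v_span sm X"
  using v_submodule_v_span unfolding v_submodule_def by blast

lemma v_span_add: "x \<in> v_span sm X \<Longrightarrow> y \<in> v_span sm X \<Longrightarrow> x + y \<in> v_span sm X"
  using v_submodule_v_span[of sm X] unfolding v_submodule_def by blast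

lemma v_span_smult: "x \<in> v_span sm X \<Longrightarrow> sm a x \<in> v_span sm X"
  using v_submodule_v_span[of sm X] unfolding v_submodule_def by blast

lemma v_span_induct [consumes 1, case_names base zero add smult]:
  assumes "x \<in> v_span sm X"
    and "\<And>x. x \<in> X \<Longrightarrow> P x" and "P 0"
    and "\<And>x y. P x \<Longrightarrow> P y \<Longrightarrow> P (x + y)" and "\<And>a x. P x \<Longrightarrow> P (sm a x)"
  shows "P x"
proof -
  have "v_span sm X \<subseteq> {x. P x}"
    by (rule v_span_least) (use assms(2-) in \<open>auto simp: v_submodule_def\<close>)
  then show ?thesis
    using assms(1) by blast
qed

subsection \<open>Products of sets\<close>

lemma set_mult_mono: "A \<subseteq> A' \<Longrightarrow> B \<subseteq> B' \<Longrightarrow> set_mult A B \<subseteq> set_mult A' B'"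
  unfolding set_mult_def by blast

lemma set_mult_assoc:
  fixes A B C :: "'a::semigroup_mult set"
  shows "set_mult (set_mult A B) C = set_mult A (set_mult B C)"
  unfolding set_mult_def by (auto simp: mult.assoc; metis mult.assoc)

lemma finite_set_mult: "finite A \<Longrightarrow> finite B \<Longrightarrow> finite (set_mult A B)"
proof -
  have "set_mult A B = (\<lambda>(a, b). a * b) ` (A \<times> B)"
    unfolding set_mult_def by auto
  then show "finite A \<Longrightarrow> finite B \<Longrightarrow> ?thesis"
    by simp
qed

lemma finite_prods: "finite S \<Longrightarrow> finite (prods S i)"
  by (induction i) (simp_all add: finite_set_mult)

lemma prods_mono: "S \<subseteq> T \<Longrightarrow> prods S i \<subseteq> prods T i"
  by (induction i) (simp_all add: set_mult_mono)

lemma prods_regroup: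
  fixes T Q :: "'a::semigroup_mult set"
  assumes "T \<subseteq> Q" and "set_mult T T \<subseteq> Q"
  shows "j \<le> i \<Longrightarrow> i \<le> 2 * j + 1 \<Longrightarrow> prods T i \<subseteq> prods Q j"
proof (induction j arbitrary: i)
  case 0
  then consider "i = 0" | "i = 1"
    by linarith
  then show ?case
    using assms by cases simp_all
next
  case (Suc j)
  then obtain k where i: "i = Suc k"
    by (cases i) simp_all
  show ?case
  proof (cases "k \<le> 2 * j + 1")
    case True
    then have "prods T k \<subseteq> prods Q j"
      using Suc.IH Suc.prems i by simp
    then show ?thesis
      using i assms(1) by (simp add: set_mult_mono)
  next
    case False
    then have "k = Suc (2 * j + 1)"
      using Suc.prems i by simp
    then have "prods T i = set_mult (prods T (2 * j + 1)) (set_mult T T)"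
      using i by (simp add: set_mult_assoc)
    also have "\<dots> \<subseteq> set_mult (prods Q j) Q"
      using Suc.IH[of "2 * j + 1"] assms(2) by (intro set_mult_mono) simp_all
    finally show ?thesis
      by simp
  qed
qed

subsection \<open>Scalar multiplication of a \<open>V\<close>-algebra\<close>

context
  fixes sm :: "'v::comm_ring_1 \<Rightarrow> 'd::ring \<Rightarrow> 'd"
  assumes alg: "v_algebra sm"
begin

lemma smult_add_right: "sm a (x + y) = sm a x + sm a y"
  using alg unfolding v_algebra_def by blast

lemma smult_smult: "sm a (sm b x) = sm (a * b) x"
  using alg unfolding v_algebra_def by metis

lemma smult_mult_left: "sm a x * y = sm a (x * y)"
  using alg unfolding v_algebra_def by metis

lemma smult_mult_right: "x * sm a y = sm a (x * y)"
  using alg unfolding v_algebra_def by metis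

lemma smult_zero_right: "sm a 0 = 0"
  using smult_add_right[of a 0 0] by simp

lemma smult_commute: "sm a (sm b x) = sm b (sm a x)"
  by (simp add: smult_smult mult.commute)

lemma v_submodule_plus_smult:
  assumes A: "v_submodule sm A" and T: "v_submodule sm T"
  shows "v_submodule sm (plus_smult sm A c T)"
  unfolding v_submodule_def
proof (intro conjI ballI allI)
  have "0 = 0 + sm c 0"
    by (simp add: smult_zero_right)
  then show "0 \<in> plus_smult sm A c T"
    using A T unfolding v_submodule_def plus_smult_def by blast
next
  fix x y assume "x \<in> plus_smult sm A c T" "y \<in> plus_smult sm A c T"
  then obtain a1 b1 a2 b2 where "x = a1 + sm c b1" "y = a2 + sm c b2"
    and "a1 \<in> A" "b1 \<in> T" "a2 \<in> A" "b2 \<in> T"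
    unfolding plus_smult_def by blast
  moreover have "(a1 + sm c b1) + (a2 + sm c b2) = (a1 + a2) + sm c (b1 + b2)"
    by (simp add: smult_add_right algebra_simps)
  moreover have "a1 + a2 \<in> A" "b1 + b2 \<in> T"
    using A T \<open>a1 \<in> A\<close> \<open>a2 \<in> A\<close> \<open>b1 \<in> T\<close> \<open>b2 \<in> T\<close>
    unfolding v_submodule_def by blast+
  ultimately show "x + y \<in> plus_smult sm A c T"
    unfolding plus_smult_def by blast
next
  fix d x assume "x \<in> plus_smult sm A c T"
  then obtain a b where "x = a + sm c b" "a \<in> A" "b \<in> T"
    unfolding plus_smult_def by blast
  moreover have "sm d (a + sm c b) = sm d a + sm c (sm d b)"
    by (simp add: smult_add_right smult_commute)
  moreover have "sm d a \<in> A" "sm d b \<in> T"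
    using A T \<open>a \<in> A\<close> \<open>b \<in> T\<close> unfolding v_submodule_def by blast+
  ultimately show "sm d x \<in> plus_smult sm A c T"
    unfolding plus_smult_def by blast
qed

lemma smult_image_v_span: "sm c ` v_span sm X \<subseteq> v_span sm (sm c ` X)"
proof clarify
  fix x assume "x \<in> v_span sm X"
  then show "sm c x \<in> v_span sm (sm c ` X)"
  proof (induction rule: v_span_induct)
    case (base x)
    then show ?case by (simp add: v_span_superset[THEN subsetD])
  next
    case zero
    then show ?case by (simp add: smult_zero_right v_span_zero)
  next
    case (add x y)
    then show ?case by (simp add: smult_add_right v_span_add)
  next
    case (smult a x)
    then show ?case by (simp add: smult_commute[of c a] v_span_smult)
  qed
qed

lemma smult_image_plus_smult: "sm c ` plus_smult sm A d T \<subseteq> plus_smult sm (sm c ` A) d (sm c ` T)"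
proof
  fix x assume "x \<in> sm c ` plus_smult sm A d T"
  then obtain a b where "x = sm c (a + sm d b)" "a \<in> A" "b \<in> T"
    unfolding plus_smult_def by blast
  moreover have "sm c (a + sm d b) = sm c a + sm d (sm c b)"
    by (simp add: smult_add_right smult_commute)
  ultimately show "x \<in> plus_smult sm (sm c ` A) d (sm c ` T)"
    unfolding plus_smult_def by blast
qed

lemma set_mult_v_span: "set_mult (v_span sm X) (v_span sm Y) \<subseteq> v_span sm (set_mult X Y)"
proof -
  have right: "x * y \<in> v_span sm (set_mult X Y)" if x: "x \<in> X" and "y \<in> v_span sm Y" for x y
    using that(2)
  proof (induction rule: v_span_induct)
    case (base y)
    then have "x * y \<in> set_mult X Y"
      using x unfolding set_mult_def by blast
    then show ?case
      using v_span_superset by blast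
  next
    case zero
    then show ?case by (simp add: v_span_zero)
  next
    case (add y z)
    then show ?case by (simp add: distrib_left v_span_add)
  next
    case (smult a y)
    then show ?case by (simp add: smult_mult_right v_span_smult)
  qed
  have "x * y \<in> v_span sm (set_mult X Y)" if "x \<in> v_span sm X" and y: "y \<in> v_span sm Y" for x y
    using that(1)
  proof (induction rule: v_span_induct)
    case (base x)
    then show ?case using right y by blast
  next
    case zero
    then show ?case by (simp add: v_span_zero)
  next
    case (add x z)
    then show ?case by (simp add: distrib_right v_span_add)
  next
    case (smult a x)
    then show ?case by (simp add: smult_mult_left v_span_smult)
  qed
  then show ?thesis
    unfolding set_mult_def by blast
qed

lemma set_mult_plus_smult:
  assumes "A1 \<subseteq> T1" and "A2 \<subseteq> T2" and "v_submodule sm T2"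
    and "v_submodule sm T" and "set_mult T1 T2 \<subseteq> T"
  shows "set_mult (plus_smult sm A1 c T1) (plus_smult sm A2 c T2) \<subseteq> plus_smult sm (set_mult A1 A2) c T"
proof clarify
  fix x assume "x \<in> set_mult (plus_smult sm A1 c T1) (plus_smult sm A2 c T2)"
  then obtain a1 b1 a2 b2 where x: "x = (a1 + sm c b1) * (a2 + sm c b2)"
    and in1: "a1 \<in> A1" "b1 \<in> T1" and in2: "a2 \<in> A2" "b2 \<in> T2"
    unfolding set_mult_def plus_smult_def by blast
  have "x = a1 * a2 + sm c (a1 * b2 + b1 * a2 + b1 * sm c b2)"
    unfolding x by (simp add: algebra_simps smult_add_right smult_mult_left smult_mult_right)
  moreover have "a1 * b2 + b1 * a2 + b1 * sm c b2 \<in> T"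
  proof -
    have "sm c b2 \<in> T2"
      using in2 assms(3) unfolding v_submodule_def by blast
    then have "a1 * b2 \<in> T" "b1 * a2 \<in> T" "b1 * sm c b2 \<in> T"
      using in1 in2 assms(1,2,5) unfolding set_mult_def by blast+
    then show ?thesis
      using assms(4) unfolding v_submodule_def by blast
  qed
  moreover have "a1 * a2 \<in> set_mult A1 A2"
    using in1 in2 unfolding set_mult_def by blast
  ultimately show "x \<in> plus_smult sm (set_mult A1 A2) c T"
    unfolding plus_smult_def by blast
qed

lemma prods_plus_smult:
  assumes S: "S \<subseteq> plus_smult sm (v_span sm F) c T" and "F \<subseteq> T"
  shows "prods S i \<subseteq> plus_smult sm (v_span sm (prods F i)) c (v_span sm (prods T i))"
proof -
  have "plus_smult sm (v_span sm F) c T \<subseteq> plus_smult sm (v_span sm F) c (v_span sm T)"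
    by (intro plus_smult_mono order_refl v_span_superset)
  with S have S': "S \<subseteq> plus_smult sm (v_span sm F) c (v_span sm T)"
    by (rule order_trans)
  show ?thesis
  proof (induction i)
    case 0
    show ?case
      using S' by simp
  next
    case (Suc i)
    have "prods S (Suc i) \<subseteq>
        set_mult (plus_smult sm (v_span sm (prods F i)) c (v_span sm (prods T i)))
          (plus_smult sm (v_span sm F) c (v_span sm T))"
      using Suc.IH S' by (simp add: set_mult_mono)
    also have "\<dots> \<subseteq>
        plus_smult sm (set_mult (v_span sm (prods F i)) (v_span sm F)) c (v_span sm (prods T (Suc i)))"
      using set_mult_v_span[of "prods T i" T] \<open>F \<subseteq> T\<close>
      by (intro set_mult_plus_smult) (simp_all add: v_span_mono prods_mono v_submodule_v_span)
    also have "\<dots> \<subseteq> plus_smult sm (v_span sm (prods F (Suc i))) c (v_span sm (prods T (Suc i)))"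
      by (simp add: plus_smult_mono set_mult_v_span)
    finally show ?case .
  qed
qed

end

subsection \<open>Compactoid subsets of a fixed submodule\<close>

lemma compactoid_in_subset: "compactoid_in sm p T S \<Longrightarrow> S' \<subseteq> S \<Longrightarrow> compactoid_in sm p T S'"
  unfolding compactoid_in_def by (meson order_trans)

lemma compactoid_in_mono:
  assumes "compactoid_in sm p T S" and "T \<subseteq> T'" and "v_submodule sm T'"
  shows "compactoid_in sm p T' S"
proof -
  have "plus_smult sm A c T \<subseteq> plus_smult sm A c T'" for A c
    using assms(2) by (rule plus_smult_mono[OF order_refl])
  then show ?thesis
    using assms unfolding compactoid_in_def by (meson order_trans)
qed

lemma compactoid_in_Un:
  assumes S1: "compactoid_in sm p T S1" and S2: "compactoid_in sm p T S2"
  shows "compactoid_in sm p T (S1 \<union> S2)"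
proof -
  have "\<exists>F. finite F \<and> F \<subseteq> T \<and> S1 \<union> S2 \<subseteq> plus_smult sm (v_span sm F) (p ^ n) T" for n
  proof -
    obtain F1 F2 where "finite F1" "F1 \<subseteq> T" "S1 \<subseteq> plus_smult sm (v_span sm F1) (p ^ n) T"
      and "finite F2" "F2 \<subseteq> T" "S2 \<subseteq> plus_smult sm (v_span sm F2) (p ^ n) T"
      using S1 S2 unfolding compactoid_in_def by meson
    moreover have "plus_smult sm (v_span sm Fi) (p ^ n) T \<subseteq> plus_smult sm (v_span sm (F1 \<union> F2)) (p ^ n) T"
      if "Fi \<subseteq> F1 \<union> F2" for Fi
      using that by (intro plus_smult_mono v_span_mono order_refl)
    ultimately show ?thesis
      by (intro exI[of _ "F1 \<union> F2"]) blast
  qed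
  then show ?thesis
    using S1 S2 unfolding compactoid_in_def by blast
qed

lemma dagger_span_mono: "S \<subseteq> Q \<Longrightarrow> dagger_span sm p S \<subseteq> dagger_span sm p Q"
  unfolding dagger_span_def by (intro v_span_mono UN_mono image_mono prods_mono) simp_all

lemma v_submodule_dagger_span: "v_submodule sm (dagger_span sm p S)"
  unfolding dagger_span_def by (rule v_submodule_v_span)

lemma smult_power_prods_in_dagger_span:
  assumes "x \<in> prods S i"
  shows "sm (p ^ i) x \<in> dagger_span sm p S"
proof -
  have "sm (p ^ i) x \<in> (\<Union>i. sm (p ^ i) ` prods S i)"
    using assms by blast
  then show ?thesis
    unfolding dagger_span_def by (rule v_span_superset[THEN subsetD])
qed

context
  fixes sm :: "'v::comm_ring_1 \<Rightarrow> 'd::ring \<Rightarrow> 'd"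
  assumes alg: "v_algebra sm"
begin

lemma compactoid_in_finite:
  assumes "v_submodule sm T" and "finite S" and "S \<subseteq> T"
  shows "compactoid_in sm p T S"
proof -
  have "x = x + sm c 0" for x c
    by (simp add: smult_zero_right[OF alg])
  moreover have "0 \<in> T"
    using assms(1) unfolding v_submodule_def by blast
  ultimately have "S \<subseteq> plus_smult sm (v_span sm S) c T" for c
    using v_span_superset unfolding plus_smult_def by blast
  then show ?thesis
    using assms unfolding compactoid_in_def by blast
qed

lemma compactoid_in_v_span: "compactoid_in sm p T S \<Longrightarrow> compactoid_in sm p T (v_span sm S)"
  unfolding compactoid_in_def
  by (meson v_span_least v_submodule_plus_smult[OF alg] v_submodule_v_span)

lemma compactoid_in_set_mult:
  assumes S1: "compactoid_in sm p T1 S1" and S2: "compactoid_in sm p T2 S2"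
    and T: "v_submodule sm T" "set_mult T1 T2 \<subseteq> T"
  shows "compactoid_in sm p T (set_mult S1 S2)"
proof -
  from S1 S2 have T1: "v_submodule sm T1" "S1 \<subseteq> T1" and T2: "v_submodule sm T2" "S2 \<subseteq> T2"
    unfolding compactoid_in_def by blast+
  have "\<exists>F. finite F \<and> F \<subseteq> T \<and> set_mult S1 S2 \<subseteq> plus_smult sm (v_span sm F) (p ^ n) T" for n
  proof -
    obtain F1 F2 where F1: "finite F1" "F1 \<subseteq> T1" "S1 \<subseteq> plus_smult sm (v_span sm F1) (p ^ n) T1"
      and F2: "finite F2" "F2 \<subseteq> T2" "S2 \<subseteq> plus_smult sm (v_span sm F2) (p ^ n) T2"
      using S1 S2 unfolding compactoid_in_def by meson
    have "set_mult S1 S2 \<subseteq>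
        set_mult (plus_smult sm (v_span sm F1) (p ^ n) T1) (plus_smult sm (v_span sm F2) (p ^ n) T2)"
      using F1(3) F2(3) by (rule set_mult_mono)
    also have "\<dots> \<subseteq> plus_smult sm (set_mult (v_span sm F1) (v_span sm F2)) (p ^ n) T"
      using v_span_least[OF T1(1) F1(2)] v_span_least[OF T2(1) F2(2)] T2(1) T
      by (rule set_mult_plus_smult[OF alg])
    also have "\<dots> \<subseteq> plus_smult sm (v_span sm (set_mult F1 F2)) (p ^ n) T"
      by (intro plus_smult_mono set_mult_v_span[OF alg] order_refl)
    finally have "set_mult S1 S2 \<subseteq> plus_smult sm (v_span sm (set_mult F1 F2)) (p ^ n) T" .
    moreover have "set_mult F1 F2 \<subseteq> T"
      using set_mult_mono[OF F1(2) F2(2)] T(2) by (rule order_trans)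
    moreover have "finite (set_mult F1 F2)"
      using F1(1) F2(1) by (rule finite_set_mult)
    ultimately show ?thesis
      by blast
  qed
  moreover have "set_mult S1 S2 \<subseteq> T"
    using set_mult_mono[OF T1(2) T2(2)] T(2) by (rule order_trans)
  ultimately show ?thesis
    using T(1) unfolding compactoid_in_def by blast
qed

lemma smult_power_prods_subset:
  assumes S: "S \<subseteq> plus_smult sm (v_span sm F) (p ^ n) T" "S \<subseteq> T"
    and T: "F \<subseteq> T" "T \<subseteq> Q" "set_mult T T \<subseteq> Q"
  shows "sm (p ^ i) ` prods S i \<subseteq>
    plus_smult sm (v_span sm (\<Union>j<2 * n. sm (p ^ j) ` prods F j)) (p ^ n) (dagger_span sm p Q)"
proof (cases "i < 2 * n")
  case True
  have "sm (p ^ i) ` prods S i \<subseteq>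
      sm (p ^ i) ` plus_smult sm (v_span sm (prods F i)) (p ^ n) (v_span sm (prods T i))"
    using prods_plus_smult[OF alg S(1) T(1)] by (rule image_mono)
  also have "\<dots> \<subseteq> plus_smult sm (sm (p ^ i) ` v_span sm (prods F i)) (p ^ n) (sm (p ^ i) ` v_span sm (prods T i))"
    by (rule smult_image_plus_smult[OF alg])
  also have "\<dots> \<subseteq> plus_smult sm (v_span sm (sm (p ^ i) ` prods F i)) (p ^ n) (v_span sm (sm (p ^ i) ` prods T i))"
    by (intro plus_smult_mono smult_image_v_span[OF alg])
  also have "\<dots> \<subseteq> plus_smult sm (v_span sm (\<Union>j<2 * n. sm (p ^ j) ` prods F j)) (p ^ n) (dagger_span sm p Q)"
    unfolding dagger_span_def using True prods_mono[OF T(2), of i]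
    by (intro plus_smult_mono v_span_mono) blast+
  finally show ?thesis .
next
  case False
  have "i \<le> 2 * (i - n) + 1"
    using False by linarith
  then have "prods S i \<subseteq> prods Q (i - n)"
    using prods_mono[OF S(2)] prods_regroup[OF T(2,3), of "i - n" i] by auto
  moreover have "sm (p ^ i) x = 0 + sm (p ^ n) (sm (p ^ (i - n)) x)" for x
    using False by (simp add: smult_smult[OF alg] flip: power_add)
  ultimately show ?thesis
    unfolding plus_smult_def using v_span_zero smult_power_prods_in_dagger_span by blast
qed

lemma compactoid_in_dagger_span:
  assumes S: "compactoid_in sm p T S" and T: "T \<subseteq> Q" "set_mult T T \<subseteq> Q"
  shows "compactoid_in sm p (dagger_span sm p Q) (dagger_span sm p S)"
proof -
  from S have "S \<subseteq> T"
    unfolding compactoid_in_def by blast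
  have "\<exists>F'. finite F' \<and> F' \<subseteq> dagger_span sm p Q \<and>
      dagger_span sm p S \<subseteq> plus_smult sm (v_span sm F') (p ^ n) (dagger_span sm p Q)" for n
  proof -
    obtain F where F: "finite F" "F \<subseteq> T" "S \<subseteq> plus_smult sm (v_span sm F) (p ^ n) T"
      using S unfolding compactoid_in_def by blast
    define F' where "F' = (\<Union>j<2 * n. sm (p ^ j) ` prods F j)"
    have "finite F'"
      unfolding F'_def using F(1) by (simp add: finite_prods)
    moreover have "F' \<subseteq> dagger_span sm p Q"
    proof -
      have "prods F j \<subseteq> prods Q j" for j
        using F(2) T(1) by (intro prods_mono) (rule order_trans)
      then show ?thesis
        unfolding F'_def by (blast intro: smult_power_prods_in_dagger_span)
    qed
    moreover have "(\<Union>i. sm (p ^ i) ` prods S i) \<subseteq> plus_smult sm (v_span sm F') (p ^ n) (dagger_span sm p Q)"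
      unfolding F'_def using F(3) \<open>S \<subseteq> T\<close> F(2) T by (intro UN_least smult_power_prods_subset)
    then have "dagger_span sm p S \<subseteq> plus_smult sm (v_span sm F') (p ^ n) (dagger_span sm p Q)"
      unfolding dagger_span_def[of sm p S]
      by (intro v_span_least v_submodule_plus_smult[OF alg] v_submodule_v_span v_submodule_dagger_span)
    ultimately show ?thesis
      by blast
  qed
  moreover have "dagger_span sm p S \<subseteq> dagger_span sm p Q"
    using \<open>S \<subseteq> T\<close> T(1) by (intro dagger_span_mono) (rule order_trans)
  ultimately show ?thesis
    unfolding compactoid_in_def using v_submodule_dagger_span by blast
qed

end

subsection \<open>The compactoid bornology\<close>

lemma bornological_moduleD:
  assumes "bornological_module sm B"
  shows bounded_finite: "finite S \<Longrightarrow> S \<in> B"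
    and bounded_Un: "S \<in> B \<Longrightarrow> T \<in> B \<Longrightarrow> S \<union> T \<in> B"
    and bounded_submodule_hull: "S \<in> B \<Longrightarrow> \<exists>T\<in>B. v_submodule sm T \<and> S \<subseteq> T"
  using assms by (simp_all add: bornological_module_def bornology_def)

lemma bornological_algebraD:
  assumes "bornological_algebra sm B"
  shows "v_algebra sm" and "bornological_module sm B"
    and "S \<in> B \<Longrightarrow> T \<in> B \<Longrightarrow> set_mult S T \<in> B"
  using assms by (simp_all add: bornological_algebra_def)

lemma bornology_compactoid_bornology:
  assumes alg: "v_algebra sm" and B: "bornological_module sm B"
  shows "bornology (compactoid_bornology sm p B)"
proof -
  have "compactoid sm p B S" if fin: "finite S" for S
  proof -
    obtain T where "T \<in> B" "v_submodule sm T" "S \<subseteq> T"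
      using bounded_submodule_hull[OF B bounded_finite[OF B fin]] by blast
    with compactoid_in_finite[OF alg \<open>v_submodule sm T\<close> fin \<open>S \<subseteq> T\<close>] show ?thesis
      unfolding compactoid_iff by blast
  qed
  moreover have "compactoid sm p B (S1 \<union> S2)"
    if S: "compactoid sm p B S1" "compactoid sm p B S2" for S1 S2
  proof -
    obtain T1 T2 where T1: "T1 \<in> B" "compactoid_in sm p T1 S1" and T2: "T2 \<in> B" "compactoid_in sm p T2 S2"
      using S unfolding compactoid_iff by blast
    obtain T where T: "T \<in> B" "v_submodule sm T" "T1 \<union> T2 \<subseteq> T"
      using bounded_submodule_hull[OF B bounded_Un[OF B T1(1) T2(1)]] by blast
    have "compactoid_in sm p T S1" "compactoid_in sm p T S2"
      using compactoid_in_mono[OF T1(2) _ T(2)] compactoid_in_mono[OF T2(2) _ T(2)] T(3) by simp_all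
    then show ?thesis
      using T(1) compactoid_in_Un unfolding compactoid_iff by blast
  qed
  moreover have "compactoid sm p B S'" if "compactoid sm p B S" "S' \<subseteq> S" for S S'
    using that compactoid_in_subset unfolding compactoid_iff by blast
  ultimately show ?thesis
    unfolding bornology_def compactoid_bornology_def by simp
qed

lemma bornological_algebra_compactoid_bornology:
  assumes B: "bornological_algebra sm B"
  shows "bornological_algebra sm (compactoid_bornology sm p B)"
proof -
  note alg = bornological_algebraD(1)[OF B] and mod = bornological_algebraD(2)[OF B]
  have "compactoid sm p B (v_span sm S)" if "compactoid sm p B S" for S
    using that compactoid_in_v_span[OF alg] unfolding compactoid_iff by blast
  then have "\<exists>T\<in>compactoid_bornology sm p B. v_submodule sm T \<and> S \<subseteq> T"
    if "S \<in> compactoid_bornology sm p B" for S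
    using that v_submodule_v_span v_span_superset unfolding compactoid_bornology_def by blast
  moreover have "compactoid sm p B (set_mult S1 S2)"
    if S: "compactoid sm p B S1" "compactoid sm p B S2" for S1 S2
  proof -
    obtain T1 T2 where T1: "T1 \<in> B" "compactoid_in sm p T1 S1" and T2: "T2 \<in> B" "compactoid_in sm p T2 S2"
      using S unfolding compactoid_iff by blast
    obtain T where "T \<in> B" "v_submodule sm T" "set_mult T1 T2 \<subseteq> T"
      using bounded_submodule_hull[OF mod bornological_algebraD(3)[OF B T1(1) T2(1)]] by blast
    then show ?thesis
      using compactoid_in_set_mult[OF alg T1(2) T2(2)] unfolding compactoid_iff by blast
  qed
  ultimately show ?thesis
    using alg bornology_compactoid_bornology[OF alg mod]
    unfolding bornological_algebra_def bornological_module_def compactoid_bornology_def by simp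
qed

lemma semidagger_compactoid_bornology:
  assumes B: "bornological_algebra sm B" and dagger: "semidagger sm p B"
  shows "semidagger sm p (compactoid_bornology sm p B)"
  unfolding semidagger_iff compactoid_bornology_def
proof clarify
  fix S assume "compactoid sm p B S"
  then obtain T where T: "T \<in> B" "compactoid_in sm p T S"
    unfolding compactoid_iff by blast
  have "T \<union> set_mult T T \<in> B"
    using bornological_algebraD[OF B] T(1) by (simp add: bounded_Un)
  then have "dagger_span sm p (T \<union> set_mult T T) \<in> B"
    using dagger unfolding semidagger_iff by blast
  moreover have "compactoid_in sm p (dagger_span sm p (T \<union> set_mult T T)) (dagger_span sm p S)"
    using bornological_algebraD(1)[OF B] T(2) by (rule compactoid_in_dagger_span) simp_all
  ultimately show "compactoid sm p B (dagger_span sm p S)"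
    unfolding compactoid_iff by blast
qed

theorem lemma4p7:
  fixes sm :: "'v::idom \<Rightarrow> 'd::ring \<Rightarrow> 'd" and p :: 'v and B :: "'d set set"
  assumes "dvr_uniformiser p" and "pi_adically_complete p"
    and "bornological_algebra sm B"
  shows "bornological_algebra sm (compactoid_bornology sm p B)
    \<and> (semidagger sm p B \<longrightarrow> semidagger sm p (compactoid_bornology sm p B))"
  using bornological_algebra_compactoid_bornology[OF assms(3)]
    semidagger_compactoid_bornology[OF assms(3)] by blast

end
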